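(* Let $n\ge1$, $h>0$, $\lambda>0$, and let $f:\mathbb{R}^n\to\mathbb{R}$ be a function whose modulus of continuity $\omega_f(t)=\sup\{|f(x)-f(y)|:x,y\in\mathbb{R}^n,\ |x-y|\le t\}$ satisfies $\omega_f(t)\le at+b$ for all $t\ge0$, with constants $a>0$, $b\ge0$. Then for every grid point $x_k\in h\mathbb{Z}^n$, $$\big|M^h_\lambda(f)(x_k)-M_\lambda(f)(x_k)\big|\le \omega_f(h\sqrt n)+2\lambda h^2 n+2h\sqrt\lambda\,d(\lambda),$$ where $d(\lambda)=\sqrt{\omega_f\big(a/\lambda+\sqrt{b/\lambda}\big)}$.
   Context: $M_\lambda(f)(x)=\inf_{y\in\mathbb{R}^n}\{f(y)+\lambda|y-x|^2\}$ is the lower Moreau envelope, and the discrete lower Moreau envelope at a grid point $x_k$ of the grid of size $h$ is $M^h_\lambda(f)(x_k)=\inf\{f(x_k+rh)+\lambda h^2|r|^2:\ r\in\mathbb{Z}^n\}$. Here $|\cdot|$ is the Euclidean norm. *)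

theory Defs
  imports "HOL-Analysis.Analysis"
begin

definition modulus_cont :: "(real^'n \<Rightarrow> real) \<Rightarrow> real \<Rightarrow> real" where
  "modulus_cont f t = Sup {\<bar>f x - f y\<bar> | x y. norm (x - y) \<le> t}"

definition moreau :: "(real^'n \<Rightarrow> real) \<Rightarrow> real \<Rightarrow> real^'n \<Rightarrow> real" where
  "moreau f lam x = Inf {f y + lam * (norm (y - x))^2 | y. True}"

definition ivec :: "int^'n \<Rightarrow> real^'n" where
  "ivec r = (\<chi> i. real_of_int (r $ i))"

definition dmoreau :: "(real^'n \<Rightarrow> real) \<Rightarrow> real \<Rightarrow> real \<Rightarrow> real^'n \<Rightarrow> real" where
  "dmoreau f lam h x = Inf {f (x + h *\<^sub>R ivec r) + lam * h^2 * (norm (ivec r))^2 | r. True}"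

end

theory Submission
  imports Defs
begin

text \<open>The continuous envelope minimises over a superset of the grid competitors, so
  M_lam(f) <= M^h_lam(f). Conversely, rounding every coordinate of y - x towards zero onto
  the grid yields a grid competitor with no larger penalty that lies within h sqrt n of y;
  hence M^h_lam(f) <= M_lam(f) + omega_f(h sqrt n). This holds at every base point and already
  gives the bound, the two remaining terms being nonnegative. The affine bound on omega_f only
  serves to make the suprema and infima involved finite.\<close>

lemma norm_le_sqrt_card_if_components_le:
  fixes v :: "real^'n"
  assumes "\<And>i. \<bar>v $ i\<bar> \<le> c"
  shows "norm v \<le> c * sqrt (real CARD('n))"
proof -
  have c: "c \<ge> 0" using assms[of undefined] by linarith
  have "norm v = sqrt (\<Sum>i\<in>UNIV. (v $ i)^2)"
    by (simp add: norm_vec_def L2_set_def)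
  also have "\<dots> \<le> sqrt (\<Sum>i\<in>(UNIV::'n set). c^2)"
    using assms by (intro real_sqrt_le_mono sum_mono) (metis abs_le_square_iff abs_of_nonneg c)
  also have "\<dots> = c * sqrt (real CARD('n))"
    using c by (simp add: real_sqrt_mult mult.commute)
  finally show ?thesis .
qed

lemma exists_grid_point_toward_zero:
  fixes d h :: real
  assumes "h > 0"
  shows "\<exists>m::int. \<bar>h * m\<bar> \<le> \<bar>d\<bar> \<and> \<bar>d - h * m\<bar> \<le> h"
proof -
  define q where "q = \<lfloor>\<bar>d\<bar> / h\<rfloor>"
  have "q \<le> \<bar>d\<bar> / h" "\<bar>d\<bar> / h < q + 1" "0 \<le> q"
    using assms by (simp_all add: q_def)
  then have q: "0 \<le> h * q" "h * q \<le> \<bar>d\<bar>" "\<bar>d\<bar> < h * q + h"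
    using assms by (simp_all add: field_simps)
  show ?thesis
  proof (cases "d \<ge> 0")
    case True
    with q show ?thesis by (intro exI[of _ q]) auto
  next
    case False
    with q show ?thesis by (intro exI[of _ "-q"]) auto
  qed
qed

lemma exists_grid_point_toward_zero_vec:
  fixes v :: "real^'n" and h :: real
  assumes "h > 0"
  shows "\<exists>r. norm (h *\<^sub>R ivec r) \<le> norm v \<and> norm (v - h *\<^sub>R ivec r) \<le> h * sqrt (real CARD('n))"
proof -
  have "\<forall>i. \<exists>m::int. \<bar>h * m\<bar> \<le> \<bar>v $ i\<bar> \<and> \<bar>v $ i - h * m\<bar> \<le> h"
    using exists_grid_point_toward_zero[OF assms] by blast
  then obtain m :: "'n \<Rightarrow> int" where m: "\<And>i. \<bar>h * m i\<bar> \<le> \<bar>v $ i\<bar> \<and> \<bar>v $ i - h * m i\<bar> \<le> h"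
    by metis
  define r :: "int^'n" where "r = (\<chi> i. m i)"
  have "norm (h *\<^sub>R ivec r) \<le> norm v"
    using m by (intro norm_le_componentwise_cart) (simp add: r_def ivec_def)
  moreover have "norm (v - h *\<^sub>R ivec r) \<le> h * sqrt (real CARD('n))"
    using m by (intro norm_le_sqrt_card_if_components_le) (simp add: r_def ivec_def)
  ultimately show ?thesis by blast
qed

lemma abs_diff_le_modulus_cont:
  fixes f :: "real^'n \<Rightarrow> real"
  assumes "\<And>x y. norm (x - y) \<le> t \<Longrightarrow> \<bar>f x - f y\<bar> \<le> B" and "norm (x - y) \<le> t"
  shows "\<bar>f x - f y\<bar> \<le> modulus_cont f t"
  unfolding modulus_cont_def
  using assms by (intro cSup_upper) (auto intro: bdd_aboveI[of _ B])

lemma modulus_cont_nonneg: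
  fixes f :: "real^'n \<Rightarrow> real"
  assumes "\<And>x y. norm (x - y) \<le> t \<Longrightarrow> \<bar>f x - f y\<bar> \<le> B" and "t \<ge> 0"
  shows "modulus_cont f t \<ge> 0"
  using abs_diff_le_modulus_cont[of t f B 0 0] assms by simp

lemma moreau_objective_lower_bound:
  fixes f :: "real^'n \<Rightarrow> real"
  assumes "lam > 0" and "\<bar>f y - f x\<bar> \<le> a * norm (y - x) + b"
  shows "f x - b - a^2 / (4 * lam) \<le> f y + lam * (norm (y - x))^2"
proof -
  let ?d = "norm (y - x)"
  have "4 * lam * (a * ?d) \<le> 4 * lam * (a^2 / (4 * lam) + lam * ?d^2)"
    using assms(1) sum_power2_ge_zero[of "2 * lam * ?d - a" 0]
    by (simp add: power2_eq_square algebra_simps)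
  then have "a * ?d \<le> a^2 / (4 * lam) + lam * ?d^2"
    using assms(1) by simp
  with assms(2) show ?thesis by linarith
qed

lemma grid_competitors_subset:
  "{f (x + h *\<^sub>R ivec r) + lam * h^2 * (norm (ivec r))^2 | r. True}
      \<subseteq> {f y + lam * (norm (y - x))^2 | y. True}"
proof
  fix t assume "t \<in> {f (x + h *\<^sub>R ivec r) + lam * h^2 * (norm (ivec r))^2 | r. True}"
  then obtain r where t: "t = f (x + h *\<^sub>R ivec r) + lam * h^2 * (norm (ivec r))^2"
    by blast
  have "lam * h^2 * (norm (ivec r))^2 = lam * (norm (x + h *\<^sub>R ivec r - x))^2"
    by (simp add: power_mult_distrib)
  then show "t \<in> {f y + lam * (norm (y - x))^2 | y. True}"
    unfolding t by (intro CollectI exI[of _ "x + h *\<^sub>R ivec r"]) simp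
qed

lemma moreau_le_dmoreau:
  fixes f :: "real^'n \<Rightarrow> real"
  assumes "bdd_below {f y + lam * (norm (y - x))^2 | y. True}"
  shows "moreau f lam x \<le> dmoreau f lam h x"
  unfolding moreau_def dmoreau_def
  using assms by (intro cInf_superset_mono grid_competitors_subset) auto

lemma dmoreau_le_moreau_plus:
  fixes f :: "real^'n \<Rightarrow> real"
  assumes "h > 0" and "lam \<ge> 0"
    and bdd: "bdd_below {f y + lam * (norm (y - x))^2 | y. True}"
    and close: "\<And>z y. norm (z - y) \<le> h * sqrt (real CARD('n)) \<Longrightarrow> f z - f y \<le> w"
  shows "dmoreau f lam h x \<le> moreau f lam x + w"
proof -
  let ?T = "{f (x + h *\<^sub>R ivec r) + lam * h^2 * (norm (ivec r))^2 | r. True}"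
  have "bdd_below ?T"
    by (rule bdd_below_mono[OF bdd grid_competitors_subset])
  have "Inf ?T - w \<le> f y + lam * (norm (y - x))^2" for y
  proof -
    obtain r where r1: "norm (h *\<^sub>R ivec r) \<le> norm (y - x)"
      and r2: "norm (y - x - h *\<^sub>R ivec r) \<le> h * sqrt (real CARD('n))"
      using exists_grid_point_toward_zero_vec[OF assms(1)] by blast
    have "Inf ?T \<le> f (x + h *\<^sub>R ivec r) + lam * h^2 * (norm (ivec r))^2"
      using \<open>bdd_below ?T\<close> by (intro cInf_lower) blast+
    also have "lam * h^2 * (norm (ivec r))^2 = lam * (norm (h *\<^sub>R ivec r))^2"
      using assms(1) by (simp add: power_mult_distrib)
    also have "\<dots> \<le> lam * (norm (y - x))^2"
      using r1 assms(2) by (intro mult_left_mono power_mono) auto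
    finally show ?thesis
      using close[of "x + h *\<^sub>R ivec r" y] r2 by (simp add: norm_minus_commute algebra_simps)
  qed
  then have "Inf ?T - w \<le> moreau f lam x"
    unfolding moreau_def by (intro cInf_greatest) auto
  then show ?thesis unfolding dmoreau_def by linarith
qed

theorem theorem4p2:
  fixes f :: "real^'n \<Rightarrow> real" and h lam a b :: real and k :: "int^'n"
  assumes "h > 0" and "lam > 0" and "a > 0" and "b \<ge> 0"
    and omega: "\<And>t x y. t \<ge> 0 \<Longrightarrow> norm (x - y) \<le> t \<Longrightarrow> \<bar>f x - f y\<bar> \<le> a * t + b"
  shows "\<bar>dmoreau f lam h (h *\<^sub>R ivec k) - moreau f lam (h *\<^sub>R ivec k)\<bar>
     \<le> modulus_cont f (h * sqrt (real CARD('n))) + 2 * lam * h^2 * real CARD('n)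
       + 2 * h * sqrt lam * sqrt (modulus_cont f (a / lam + sqrt (b / lam)))"
proof -
  define x where "x = h *\<^sub>R ivec k"
  define t where "t = h * sqrt (real CARD('n))"
  have "f x - b - a^2 / (4 * lam) \<le> f y + lam * (norm (y - x))^2" for y
    using moreau_objective_lower_bound[OF \<open>lam > 0\<close> omega[of "norm (y - x)" y x]] by simp
  then have bdd: "bdd_below {f y + lam * (norm (y - x))^2 | y. True}"
    by (intro bdd_belowI[of _ "f x - b - a^2 / (4 * lam)"]) auto
  have "f z - f y \<le> modulus_cont f t" if "norm (z - y) \<le> t" for z y
    using abs_diff_le_modulus_cont[of t f "a * t + b" z y] omega \<open>h > 0\<close> that
    by (simp add: t_def)
  then have "\<bar>dmoreau f lam h x - moreau f lam x\<bar> \<le> modulus_cont f t"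
    using moreau_le_dmoreau[OF bdd, of h] \<open>lam > 0\<close>
      dmoreau_le_moreau_plus[OF \<open>h > 0\<close> _ bdd, of "modulus_cont f t"]
    by (simp add: t_def abs_le_iff)
  moreover have "modulus_cont f (a / lam + sqrt (b / lam)) \<ge> 0"
    using assms by (intro modulus_cont_nonneg[where B = "a * (a / lam + sqrt (b / lam)) + b"]) auto
  then have "0 \<le> 2 * h * sqrt lam * sqrt (modulus_cont f (a / lam + sqrt (b / lam)))"
    using assms by simp
  moreover have "0 \<le> 2 * lam * h^2 * real CARD('n)"
    using assms by simp
  ultimately show ?thesis
    unfolding x_def t_def by linarith
qed

end
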